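(* Let $d$ be an integer and let $C_1$ and $C_2$ be the curves $$C_1: y^2=x^3-d^2x,\qquad C_2: y^2=x^3+d^2x.$$ For a prime $p>2$ let $N_{p,i}$ be the number of solutions $(x,y)\in\mathbb{Z}_p\times\mathbb{Z}_p$ of the defining equation of $C_i$ taken modulo $p$, and $a_{p,i}=p-N_{p,i}$. Then $a_{p,1}+a_{p,2}=0$ for every prime $p>2$ such that $-1\in QR_p$ and $\epsilon\in QNR_p$, where $\epsilon\in\mathbb{Z}_p^*$ satisfies $\epsilon^2\equiv-1\pmod p$.
   Context: $\mathbb{Z}_p$ denotes the integers modulo $p$, $\mathbb{Z}_p^*=\{1,\dots,p-1\}$. $QR_p=\{x\in\mathbb{Z}_p^*: \exists y\in\mathbb{Z}_p^*,\ y^2\equiv x \pmod p\}$ is the set of nonzero quadratic residues modulo $p$ and $QNR_p=\mathbb{Z}_p^*\setminus QR_p$ the set of quadratic nonresidues. *)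

theory Defs
  imports "HOL-Number_Theory.Number_Theory"
begin

definition QR_set :: "int \<Rightarrow> int set" where
  "QR_set p = {x \<in> {1..p-1}. \<exists>y \<in> {1..p-1}. [y^2 = x] (mod p)}"

definition QNR_set :: "int \<Rightarrow> int set" where
  "QNR_set p = {1..p-1} - QR_set p"

definition N_count :: "int \<Rightarrow> int \<Rightarrow> nat" where
  "N_count c p = card {(x, y). x \<in> {0..p-1} \<and> y \<in> {0..p-1} \<and> [y^2 = x^3 + c * x] (mod p)}"

definition a_coef :: "int \<Rightarrow> int \<Rightarrow> int" where
  "a_coef c p = p - int (N_count c p)"

end

theory Submission
  imports Defs
begin

text \<open>
  Since \<open>y\<^sup>2 \<equiv> t\<close> has \<open>1 + (t/p)\<close> solutions modulo \<open>p\<close>, the coefficient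
  \<open>a\<^sub>p\<close> of \<open>y\<^sup>2 = x\<^sup>3 + c x\<close> is the character sum \<open>-\<Sum>\<^sub>x ((x\<^sup>3 + c x)/p)\<close>.
  The substitution \<open>x \<mapsto> \<epsilon> x\<close> permutes the residues and, as \<open>\<epsilon>\<^sup>3 \<equiv> -\<epsilon>\<close>, turns
  \<open>x\<^sup>3 + d\<^sup>2 x\<close> into \<open>-\<epsilon> (x\<^sup>3 - d\<^sup>2 x)\<close>. Because \<open>-1\<close> is a residue and \<open>\<epsilon>\<close> is not,
  \<open>-\<epsilon>\<close> is a non-residue, so by multiplicativity of the Legendre symbol the two
  character sums are negatives of each other.
\<close>

lemma Legendre_cong:
  fixes a b p :: int
  assumes "[a = b] (mod p)"
  shows "Legendre a p = Legendre b p"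
  using assms unfolding Legendre_def QuadRes_def cong_def by simp

lemma euler_criterion_int:
  fixes a p :: int
  assumes "prime p" "p > 2"
  shows "[Legendre a p = a ^ ((nat p - 1) div 2)] (mod p)"
  using euler_criterion[of "nat p" a] assms by simp

lemma Legendre_mult:
  fixes a b p :: int
  assumes "prime p" "p > 2"
  shows "Legendre (a * b) p = Legendre a p * Legendre b p"
proof -
  let ?h = "(nat p - 1) div 2"
  have "[Legendre (a * b) p = a ^ ?h * b ^ ?h] (mod p)"
    using euler_criterion_int[OF assms, of "a * b"] by (simp add: power_mult_distrib)
  also have "[a ^ ?h * b ^ ?h = Legendre a p * Legendre b p] (mod p)"
    using euler_criterion_int[OF assms] by (intro cong_mult) (simp_all add: cong_sym)
  finally have "p dvd Legendre (a * b) p - Legendre a p * Legendre b p"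
    by (simp add: cong_iff_dvd_diff)
  moreover have "\<bar>Legendre (a * b) p - Legendre a p * Legendre b p\<bar> < p"
  proof -
    have "Legendre x p \<in> {-1, 0, 1}" for x
      by (simp add: Legendre_def)
    from this[of "a * b"] this[of a] this[of b] show ?thesis
      using assms(2) by auto
  qed
  ultimately show ?thesis
    using dvd_imp_le_int[of "Legendre (a * b) p - Legendre a p * Legendre b p" p] by linarith
qed

lemma square_cong_square_iff:
  fixes p y r :: int
  assumes "prime p"
  shows "[y^2 = r^2] (mod p) \<longleftrightarrow> [y = r] (mod p) \<or> [y = - r] (mod p)"
proof -
  have "y^2 - r^2 = (y - r) * (y - (- r))" by (simp add: power2_eq_square algebra_simps)
  then show ?thesis using assms by (simp add: cong_iff_dvd_diff prime_dvd_mult_iff)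
qed

lemma card_square_roots_mod_prime:
  fixes p a :: int
  assumes "prime p" "p > 2"
  shows "int (card {y \<in> {0..p-1}. [y^2 = a] (mod p)}) = 1 + Legendre a p"
proof (cases "QuadRes p a")
  case False
  then have no_roots: "{y \<in> {0..p-1}. [y^2 = a] (mod p)} = {}" and "\<not> [a = 0] (mod p)"
    unfolding QuadRes_def cong_def by (auto dest: spec[of _ 0])
  with False show ?thesis unfolding no_roots by (simp add: Legendre_def)
next
  case True
  then obtain r where r: "[r^2 = a] (mod p)" unfolding QuadRes_def by blast
  have "{y \<in> {0..p-1}. [y^2 = a] (mod p)} = {y \<in> {0..p-1}. [y^2 = r^2] (mod p)}"
    using r by (simp add: cong_def)
  also have "\<dots> = {y \<in> {0..p-1}. y = r mod p \<or> y = (- r) mod p}"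
  proof -
    have "[y = c] (mod p) \<longleftrightarrow> y = c mod p" if "y \<in> {0..p-1}" for y c
      using that by (simp add: cong_def)
    then show ?thesis
      using assms(1) by (auto simp: square_cong_square_iff)
  qed
  also have "\<dots> = {r mod p, (- r) mod p}"
    using assms(2) by auto
  finally have roots: "{y \<in> {0..p-1}. [y^2 = a] (mod p)} = {r mod p, (- r) mod p}" .
  show ?thesis
  proof (cases "p dvd r")
    case True
    then have "[a = 0] (mod p)"
      using r by (simp add: cong_def power2_eq_square mod_mult_left_eq flip: dvd_eq_mod_eq_0)
    with roots True show ?thesis by (simp add: Legendre_def)
  next
    case False
    have "odd p" using assms prime_odd_int by blast
    have minus_r: "(- r) mod p = p - r mod p"
      using False by (simp add: zmod_zminus1_eq_if dvd_eq_mod_eq_0)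
    have "r mod p \<noteq> (- r) mod p"
    proof
      assume "r mod p = (- r) mod p"
      with minus_r have "p = 2 * (r mod p)" by simp
      with \<open>odd p\<close> show False by (metis dvd_triv_left)
    qed
    moreover have "\<not> [a = 0] (mod p)"
    proof -
      have "\<not> p dvd r^2" using False assms(1) by (simp add: prime_dvd_power_iff)
      with r show ?thesis by (simp add: cong_def dvd_eq_mod_eq_0)
    qed
    ultimately show ?thesis using roots True by (simp add: Legendre_def)
  qed
qed

lemma N_count_eq_sum_Legendre:
  fixes c p :: int
  assumes "prime p" "p > 2"
  shows "int (N_count c p) = p + (\<Sum>x\<in>{0..p-1}. Legendre (x^3 + c * x) p)"
proof -
  let ?roots = "\<lambda>x. {y \<in> {0..p-1}. [y^2 = x^3 + c * x] (mod p)}"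
  have "N_count c p = card (Sigma {0..p-1} ?roots)"
    unfolding N_count_def by (rule arg_cong[where f = card]) auto
  also have "\<dots> = (\<Sum>x\<in>{0..p-1}. card (?roots x))"
    by (intro card_SigmaI finite_atLeastAtMost_int ballI
        finite_subset[OF _ finite_atLeastAtMost_int[of 0 "p-1"]]) auto
  finally have "int (N_count c p) = (\<Sum>x\<in>{0..p-1}. int (card (?roots x)))"
    by simp
  also have "\<dots> = (\<Sum>x\<in>{0..p-1}. 1 + Legendre (x^3 + c * x) p)"
    by (intro sum.cong refl card_square_roots_mod_prime assms)
  also have "\<dots> = p + (\<Sum>x\<in>{0..p-1}. Legendre (x^3 + c * x) p)"
    using assms(2) by (simp add: sum.distrib)
  finally show ?thesis .
qed

corollary a_coef_eq_neg_sum_Legendre: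
  fixes c p :: int
  assumes "prime p" "p > 2"
  shows "a_coef c p = - (\<Sum>x\<in>{0..p-1}. Legendre (x^3 + c * x) p)"
  using N_count_eq_sum_Legendre[OF assms] by (simp add: a_coef_def)

lemma sum_residues_mult_unit:
  fixes p u :: int and f :: "int \<Rightarrow> 'a::comm_monoid_add"
  assumes "prime p" "\<not> p dvd u"
    and f_cong: "\<And>x y. [x = y] (mod p) \<Longrightarrow> f x = f y"
  shows "(\<Sum>x\<in>{0..p-1}. f (u * x)) = (\<Sum>x\<in>{0..p-1}. f x)"
proof -
  let ?h = "\<lambda>x. (u * x) mod p"
  have "coprime u p"
    using assms(1,2) by (simp add: prime_imp_coprime coprime_commute)
  have "inj_on ?h {0..p-1}"
  proof (rule inj_onI)
    fix x y assume "x \<in> {0..p-1}" "y \<in> {0..p-1}" "?h x = ?h y"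
    then have "[u * x = u * y] (mod p)" and "0 \<le> x" "x < p" "0 \<le> y" "y < p"
      by (simp_all add: cong_def)
    then show "x = y"
      using \<open>coprime u p\<close> by (simp add: cong_mult_lcancel cong_less_imp_eq_int)
  qed
  moreover have "?h ` {0..p-1} \<subseteq> {0..p-1}"
    using assms(1) prime_gt_0_int by fastforce
  ultimately have "bij_betw ?h {0..p-1} {0..p-1}"
    by (simp add: bij_betw_def endo_inj_surj)
  then have "(\<Sum>x\<in>{0..p-1}. f x) = (\<Sum>x\<in>{0..p-1}. f (?h x))"
    by (rule sum.reindex_bij_betw[symmetric])
  also have "\<dots> = (\<Sum>x\<in>{0..p-1}. f (u * x))"
    by (intro sum.cong refl f_cong) simp
  finally show ?thesis by simp
qed

lemma Legendre_eq_1_if_in_QR_set: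
  fixes p x :: int
  assumes "prime p" "x \<in> QR_set p"
  shows "Legendre x p = 1"
proof -
  have "\<not> [x = 0] (mod p)"
    using assms by (auto simp: QR_set_def cong_0_iff dest: zdvd_imp_le)
  moreover have "QuadRes p x"
    using assms(2) by (auto simp: QR_set_def QuadRes_def)
  ultimately show ?thesis by (simp add: Legendre_def)
qed

lemma Legendre_eq_neg_1_if_in_QNR_set:
  fixes p x :: int
  assumes "prime p" "x \<in> QNR_set p"
  shows "Legendre x p = -1"
proof -
  have x: "x \<in> {1..p-1}" "x \<notin> QR_set p"
    using assms(2) by (auto simp: QNR_set_def)
  then have not_zero: "\<not> [x = 0] (mod p)"
    by (auto simp: cong_0_iff dest: zdvd_imp_le)
  have "\<not> QuadRes p x"
  proof
    assume "QuadRes p x"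
    then obtain y where "[y^2 = x] (mod p)" by (auto simp: QuadRes_def)
    then have y: "[(y mod p)^2 = x] (mod p)"
      by (simp add: cong_def power_mod)
    with not_zero have "y mod p \<noteq> 0"
      by (auto simp: cong_sym)
    moreover have "0 \<le> y mod p" "y mod p < p"
      using prime_gt_0_int[OF assms(1)] by simp_all
    ultimately have "y mod p \<in> {1..p-1}" by simp
    with y x(1) have "x \<in> QR_set p"
      unfolding QR_set_def by blast
    with x(2) show False ..
  qed
  with not_zero show ?thesis by (simp add: Legendre_def)
qed

lemma cube_plus_linear_mult_sqrt_neg_one:
  fixes p \<epsilon> c x :: int
  assumes "[\<epsilon>^2 = -1] (mod p)"
  shows "[(\<epsilon> * x)^3 + c * (\<epsilon> * x) = - \<epsilon> * (x^3 - c * x)] (mod p)"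
proof -
  have "(\<epsilon> * x)^3 + c * (\<epsilon> * x) = \<epsilon>^2 * (\<epsilon> * x^3) + c * (\<epsilon> * x)"
    by (simp add: power2_eq_square power3_eq_cube)
  also have "[\<epsilon>^2 * (\<epsilon> * x^3) + c * (\<epsilon> * x) = (-1) * (\<epsilon> * x^3) + c * (\<epsilon> * x)] (mod p)"
    using assms by (intro cong_add cong_mult cong_refl)
  also have "(-1) * (\<epsilon> * x^3) + c * (\<epsilon> * x) = - \<epsilon> * (x^3 - c * x)"
    by (simp add: algebra_simps)
  finally show ?thesis .
qed

theorem lemma7:
  fixes d p \<epsilon> :: int
  assumes "prime p" and "p > 2"
    and "(-1) mod p \<in> QR_set p"
    and "\<epsilon> \<in> {1..p-1}" and "[\<epsilon>^2 = -1] (mod p)"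
    and "\<epsilon> \<in> QNR_set p"
  shows "a_coef (- (d^2)) p + a_coef (d^2) p = 0"
proof -
  note p = assms(1,2)
  let ?L = "\<lambda>c x. Legendre (x^3 + c * x) p"
  have "Legendre (- \<epsilon>) p = Legendre ((-1) mod p * \<epsilon>) p"
    by (intro Legendre_cong) (simp add: cong_def mod_mult_left_eq)
  then have neg_\<epsilon>_nonresidue: "Legendre (- \<epsilon>) p = -1"
    using Legendre_mult[OF p] Legendre_eq_1_if_in_QR_set[OF p(1) assms(3)]
      Legendre_eq_neg_1_if_in_QNR_set[OF p(1) assms(6)] by simp
  have "\<not> p dvd \<epsilon>"
    using assms(4) by (auto dest: zdvd_imp_le)
  then have "a_coef (d^2) p = - (\<Sum>x\<in>{0..p-1}. ?L (d^2) (\<epsilon> * x))"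
    unfolding a_coef_eq_neg_sum_Legendre[OF p]
    by (subst sum_residues_mult_unit[OF p(1)])
      (auto intro!: Legendre_cong cong_add cong_mult cong_pow)
  also have "\<dots> = - (\<Sum>x\<in>{0..p-1}. Legendre (- \<epsilon> * (x^3 - d^2 * x)) p)"
    by (intro arg_cong[where f = uminus] sum.cong refl Legendre_cong
        cube_plus_linear_mult_sqrt_neg_one assms(5))
  also have "\<dots> = (\<Sum>x\<in>{0..p-1}. ?L (- (d^2)) x)"
    unfolding Legendre_mult[OF p] neg_\<epsilon>_nonresidue by (simp add: sum_negf)
  also have "\<dots> = - a_coef (- (d^2)) p"
    by (simp add: a_coef_eq_neg_sum_Legendre[OF p])
  finally show ?thesis by simp
qed

end
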